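(* Let $K$ be a division ring, $G$ a group, and suppose $a,b\in K[G]$, each of rank $\ge2$, satisfy $ab=1$. Then there is a subgroup $H$ of $G$ such that, letting $c=E^G_H(a)$ and $d=E^G_H(b)$: (i) $cd=1$; (ii) the ranks of $c$ and $d$ are both $\ge2$; (iii) the support of $c$ generates $H$; (iv) the support of $d$ generates $H$. Furthermore, if also $dc=1$, then $a=c$ and $b=d$.
   Context: $K[G]$ is the group ring; the support of an element is the set of group elements with nonzero coefficient and its rank is the cardinality of the support. For a subgroup $H\le G$, $E^G_H:K[G]\to K[H]$ is the $K$-linear map with $E^G_H(g)=g$ for $g\in H$ and $E^G_H(g)=0$ for $g\in G\setminus H$. *)

theory Defs
  imports "HOL-Algebra.Generated_Groups"
begin

text \<open>Elements of the group ring K[G] are finitely supported functions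
  from the carrier of G to K (zero outside the carrier).\<close>

definition gr_supp :: "('g \<Rightarrow> 'k::zero) \<Rightarrow> 'g set" where
  "gr_supp a = {g. a g \<noteq> 0}"

definition gr_rank :: "('g \<Rightarrow> 'k::zero) \<Rightarrow> nat" where
  "gr_rank a = card (gr_supp a)"

definition group_ring :: "('g, 'b) monoid_scheme \<Rightarrow> ('g \<Rightarrow> 'k::zero) set" where
  "group_ring G = {a. finite (gr_supp a) \<and> gr_supp a \<subseteq> carrier G}"

definition gr_mult :: "('g, 'b) monoid_scheme \<Rightarrow> ('g \<Rightarrow> 'k::semiring_0) \<Rightarrow> ('g \<Rightarrow> 'k) \<Rightarrow> ('g \<Rightarrow> 'k)" where
  "gr_mult G a b = (\<lambda>x. if x \<in> carrier G
      then (\<Sum>y\<in>gr_supp a. a y * b (inv\<^bsub>G\<^esub> y \<otimes>\<^bsub>G\<^esub> x)) else 0)"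

definition gr_one :: "('g, 'b) monoid_scheme \<Rightarrow> ('g \<Rightarrow> 'k::{zero,one})" where
  "gr_one G = (\<lambda>x. if x = \<one>\<^bsub>G\<^esub> then 1 else 0)"

definition gr_proj :: "'g set \<Rightarrow> ('g \<Rightarrow> 'k::zero) \<Rightarrow> ('g \<Rightarrow> 'k)" where
  "gr_proj H a = (\<lambda>g. if g \<in> H then a g else 0)"

end

theory Submission
  imports Defs
begin

text \<open>
  Call H admissible if the projections c, d of a, b to H satisfy cd = 1, both have rank at
  least 2, and dc = 1 forces a = c and b = d; H = G is admissible. Take an admissible H of
  minimal rank c + rank d. For K = \<langle>supp c\<rangle> the projection to K commutes with left
  multiplication by c, so c \<cdot> E(d) = E(cd) = 1 with E = E^H_K. An inverse of an element of
  rank \<le> 1 has rank \<le> 1, because multiplying by a monomial only translates supports; hence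
  E(d) has rank \<ge> 2, and if E(d) c = 1 then E(d) = d by uniqueness of inverses. So K is
  admissible, and minimality forces supp d \<subseteq> K. Symmetrically supp c \<subseteq> \<langle>supp d\<rangle>, so
  both supports generate the same subgroup, on which a and b still project to c and d.
\<close>

lemma gr_supp_gr_proj: "gr_supp (gr_proj H a) = gr_supp a \<inter> H"
  unfolding gr_supp_def gr_proj_def by auto

lemma gr_proj_gr_proj: "H' \<subseteq> H \<Longrightarrow> gr_proj H' (gr_proj H a) = gr_proj H' a"
  unfolding gr_proj_def by (rule ext) auto

lemma gr_proj_id: "gr_supp a \<subseteq> H \<Longrightarrow> gr_proj H a = a"
  unfolding gr_proj_def gr_supp_def by (rule ext) auto

lemma gr_proj_in_group_ring: "a \<in> group_ring G \<Longrightarrow> gr_proj H a \<in> group_ring G"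
  unfolding group_ring_def by (auto simp: gr_supp_gr_proj)

lemma group_ring_finite_supp: "a \<in> group_ring G \<Longrightarrow> finite (gr_supp a)"
  and group_ring_supp_subset: "a \<in> group_ring G \<Longrightarrow> gr_supp a \<subseteq> carrier G"
  unfolding group_ring_def by auto

lemma group_ring_supp_in_carrier: "a \<in> group_ring G \<Longrightarrow> y \<in> gr_supp a \<Longrightarrow> y \<in> carrier G"
  unfolding group_ring_def by auto

lemma group_ring_outside_carrier: "a \<in> group_ring G \<Longrightarrow> x \<notin> carrier G \<Longrightarrow> a x = 0"
  unfolding group_ring_def gr_supp_def by auto

lemma supp_subset_of_gr_rank_le_gr_proj:
  assumes "a \<in> group_ring G" "gr_rank a \<le> gr_rank (gr_proj K a)"
  shows "gr_supp a \<subseteq> K"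
proof -
  have "gr_supp a \<inter> K = gr_supp a"
    using assms group_ring_finite_supp[OF assms(1)] unfolding gr_rank_def gr_supp_gr_proj
    by (intro card_seteq) auto
  then show ?thesis by blast
qed

lemma gr_supp_gr_one: "gr_supp (gr_one G :: 'g \<Rightarrow> 'k::zero_neq_one) = {\<one>\<^bsub>G\<^esub>}"
  unfolding gr_supp_def gr_one_def by auto

lemma gr_rank_gr_one: "gr_rank (gr_one G :: 'g \<Rightarrow> 'k::zero_neq_one) = 1"
  unfolding gr_rank_def gr_supp_gr_one by simp

lemma gr_proj_gr_one: "\<one>\<^bsub>G\<^esub> \<in> H \<Longrightarrow> gr_proj H (gr_one G) = gr_one G"
  unfolding gr_proj_def gr_one_def by auto

lemma gr_mult_outside_carrier: "x \<notin> carrier G \<Longrightarrow> gr_mult G a b x = 0"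
  unfolding gr_mult_def by simp

context group
begin

lemma inv_mult_mem_subgroup_iff:
  assumes "subgroup H G" "y \<in> H" "x \<in> carrier G"
  shows "inv y \<otimes> x \<in> H \<longleftrightarrow> x \<in> H"
  by (metis assms subgroup.m_closed subgroup.m_inv_closed
      subgroup.mem_carrier inv_solve_left)

lemma mult_mem_subgroup_iff:
  assumes "subgroup H G" "z \<in> H" "y \<in> carrier G"
  shows "y \<otimes> z \<in> H \<longleftrightarrow> y \<in> H"
  by (metis assms subgroup.m_closed subgroup.m_inv_closed subgroup.mem_carrier
      inv_solve_right m_closed)

lemma gr_mult_eq_sum:
  assumes "finite A" "gr_supp a \<subseteq> A" "x \<in> carrier G"
  shows "gr_mult G a b x = (\<Sum>y\<in>A. a y * b (inv y \<otimes> x))"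
  unfolding gr_mult_def using assms
  by (auto intro!: sum.mono_neutral_left simp: gr_supp_def)

lemma gr_proj_gr_mult_left:
  assumes "subgroup H G" "gr_supp c \<subseteq> H"
  shows "gr_proj H (gr_mult G c b) = gr_mult G c (gr_proj H b)"
proof
  fix x
  have "c y * (if x \<in> H then b (inv y \<otimes> x) else 0)
      = c y * gr_proj H b (inv y \<otimes> x)" if "y \<in> gr_supp c" "x \<in> carrier G" for y
    using that assms inv_mult_mem_subgroup_iff by (auto simp: gr_proj_def)
  then show "gr_proj H (gr_mult G c b) x = gr_mult G c (gr_proj H b) x"
    by (auto simp: gr_proj_def gr_mult_def if_distrib[of "\<lambda>t. _ * t"] sum.neutral
        intro!: sum.cong)
qed

lemma gr_proj_gr_mult_right:
  assumes "subgroup H G" "a \<in> group_ring G" "gr_supp d \<subseteq> H"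
  shows "gr_proj H (gr_mult G a d) = gr_mult G (gr_proj H a) d"
proof
  fix x
  show "gr_proj H (gr_mult G a d) x = gr_mult G (gr_proj H a) d x"
  proof (cases "x \<in> carrier G")
    case x: True
    have fin: "finite (gr_supp a)" "gr_supp (gr_proj H a) \<subseteq> gr_supp a"
      using assms(2) group_ring_finite_supp by (auto simp: gr_supp_gr_proj)
    have "(if x \<in> H then a y else 0) * d (inv y \<otimes> x) = gr_proj H a y * d (inv y \<otimes> x)"
      if "y \<in> gr_supp a" for y
    proof (cases "inv y \<otimes> x \<in> H")
      case True
      have "y \<in> carrier G" using group_ring_supp_in_carrier[OF assms(2) that] .
      with x have "y \<otimes> (inv y \<otimes> x) = x" by (simp add: m_assoc[symmetric])
      with \<open>y \<in> carrier G\<close> have "x \<in> H \<longleftrightarrow> y \<in> H"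
        using mult_mem_subgroup_iff[OF assms(1) True] by metis
      then show ?thesis by (simp add: gr_proj_def)
    next
      case False
      then have "d (inv y \<otimes> x) = 0" using assms(3) by (auto simp: gr_supp_def)
      then show ?thesis by simp
    qed
    note termwise = this
    have "gr_proj H (gr_mult G a d) x
        = (\<Sum>y\<in>gr_supp a. (if x \<in> H then a y else 0) * d (inv y \<otimes> x))"
      using x fin by (cases "x \<in> H") (simp_all add: gr_proj_def gr_mult_eq_sum)
    also have "\<dots> = (\<Sum>y\<in>gr_supp a. gr_proj H a y * d (inv y \<otimes> x))"
      using termwise by (rule sum.cong[OF refl])
    also have "\<dots> = gr_mult G (gr_proj H a) d x"
      using x fin by (simp add: gr_mult_eq_sum)
    finally show ?thesis .
  qed (simp add: gr_proj_def gr_mult_outside_carrier)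
qed

lemma gr_mult_one_left:
  assumes "d \<in> group_ring G"
  shows "gr_mult G (gr_one G) d = (d :: 'a \<Rightarrow> 'k::semiring_1)"
proof
  fix x show "gr_mult G (gr_one G) d x = d x"
    using assms unfolding gr_mult_def gr_supp_gr_one
    by (simp add: gr_one_def group_ring_outside_carrier)
qed

lemma gr_mult_one_right:
  assumes "a \<in> group_ring G"
  shows "gr_mult G a (gr_one G) = (a :: 'a \<Rightarrow> 'k::semiring_1)"
proof
  fix x show "gr_mult G a (gr_one G) x = a x"
  proof (cases "x \<in> carrier G")
    case x: True
    have "inv y \<otimes> x = \<one> \<longleftrightarrow> y = x" if "y \<in> gr_supp a" for y
      using group_ring_supp_in_carrier[OF assms that] x by (auto simp: inv_solve_left')
    then have "gr_mult G a (gr_one G) x = (\<Sum>y\<in>gr_supp a. a y * (if y = x then 1 else 0))"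
      using x by (simp add: gr_mult_def gr_one_def cong: sum.cong)
    also have "\<dots> = a x"
      using group_ring_finite_supp[OF assms]
      by (simp add: if_distrib[of "(*) _"] gr_supp_def cong: if_cong)
    finally show ?thesis .
  qed (use assms in \<open>simp add: gr_mult_outside_carrier group_ring_outside_carrier\<close>)
qed

lemma gr_supp_gr_mult_subset:
  assumes "a \<in> group_ring G"
  shows "gr_supp (gr_mult G a b) \<subseteq> gr_supp a <#> gr_supp b"
proof
  fix x assume x: "x \<in> gr_supp (gr_mult G a b)"
  then have "x \<in> carrier G"
    using gr_mult_outside_carrier unfolding gr_supp_def by force
  with x have "(\<Sum>y\<in>gr_supp a. a y * b (inv y \<otimes> x)) \<noteq> 0"
    unfolding gr_supp_def gr_mult_def by simp
  then obtain y where y: "y \<in> gr_supp a" "a y * b (inv y \<otimes> x) \<noteq> 0"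
    by (rule sum.not_neutral_contains_not_neutral)
  then have "inv y \<otimes> x \<in> gr_supp b"
    unfolding gr_supp_def by auto
  moreover have "x = y \<otimes> (inv y \<otimes> x)"
    using group_ring_supp_in_carrier[OF assms y(1)] \<open>x \<in> carrier G\<close>
    by (simp add: m_assoc[symmetric])
  ultimately show "x \<in> gr_supp a <#> gr_supp b"
    using y(1) unfolding set_mult_def by blast
qed

lemma gr_mult_eq_sum_translated:
  assumes b: "b \<in> group_ring G" and Z: "finite Z" "Z \<subseteq> carrier G" "(\<otimes>) y ` gr_supp b \<subseteq> Z"
    and y: "y \<in> carrier G" and x: "x \<in> carrier G"
  shows "gr_mult G b c (inv y \<otimes> x) = (\<Sum>z\<in>Z. b (inv y \<otimes> z) * c (inv z \<otimes> x))"
proof -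
  have "gr_supp b \<subseteq> (\<otimes>) (inv y) ` Z"
  proof
    fix w assume "w \<in> gr_supp b"
    moreover have "w = inv y \<otimes> (y \<otimes> w)"
      using group_ring_supp_in_carrier[OF b calculation] y by (simp add: m_assoc[symmetric])
    ultimately show "w \<in> (\<otimes>) (inv y) ` Z" using Z(3) by blast
  qed
  then have "gr_mult G b c (inv y \<otimes> x)
      = (\<Sum>w\<in>(\<otimes>) (inv y) ` Z. b w * c (inv w \<otimes> (inv y \<otimes> x)))"
    using Z x y by (simp add: gr_mult_eq_sum)
  also have "\<dots> = (\<Sum>z\<in>Z. b (inv y \<otimes> z) * c (inv (inv y \<otimes> z) \<otimes> (inv y \<otimes> x)))"
    using Z y inj_on_subset[OF inj_on_cmult] by (simp add: sum.reindex)
  also have "\<dots> = (\<Sum>z\<in>Z. b (inv y \<otimes> z) * c (inv z \<otimes> x))"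
  proof (rule sum.cong[OF refl])
    fix z assume "z \<in> Z"
    then have "inv (inv y \<otimes> z) \<otimes> (inv y \<otimes> x) = inv z \<otimes> (y \<otimes> (inv y \<otimes> x))"
      using Z(2) x y by (auto simp: inv_mult_group m_assoc)
    also have "\<dots> = inv z \<otimes> x"
      using x y by (simp add: m_assoc[symmetric])
    finally show "b (inv y \<otimes> z) * c (inv (inv y \<otimes> z) \<otimes> (inv y \<otimes> x))
        = b (inv y \<otimes> z) * c (inv z \<otimes> x)" by simp
  qed
  finally show ?thesis .
qed

lemma gr_mult_assoc:
  assumes a: "a \<in> group_ring G" and b: "b \<in> group_ring G"
  shows "gr_mult G (gr_mult G a b) c = gr_mult G a (gr_mult G b (c :: 'a \<Rightarrow> 'k::semiring_0))"
proof
  fix x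
  let ?A = "gr_supp a" and ?Z = "gr_supp a <#> gr_supp b"
  have A: "finite ?A" "?A \<subseteq> carrier G"
    using group_ring_finite_supp[OF a] group_ring_supp_subset[OF a] .
  have Z: "finite ?Z" "?Z \<subseteq> carrier G"
    using A group_ring_finite_supp[OF b] group_ring_supp_subset[OF b]
    by (auto simp: set_mult_def)
  show "gr_mult G (gr_mult G a b) c x = gr_mult G a (gr_mult G b c) x"
  proof (cases "x \<in> carrier G")
    case x: True
    have "gr_mult G (gr_mult G a b) c x = (\<Sum>z\<in>?Z. gr_mult G a b z * c (inv z \<otimes> x))"
      using Z x gr_supp_gr_mult_subset[OF a] by (rule_tac gr_mult_eq_sum) auto
    also have "\<dots> = (\<Sum>z\<in>?Z. \<Sum>y\<in>?A. a y * (b (inv y \<otimes> z) * c (inv z \<otimes> x)))"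
      using Z by (intro sum.cong) (auto simp: gr_mult_def sum_distrib_right mult.assoc)
    also have "\<dots> = (\<Sum>y\<in>?A. a y * (\<Sum>z\<in>?Z. b (inv y \<otimes> z) * c (inv z \<otimes> x)))"
      by (subst sum.swap) (simp add: sum_distrib_left)
    also have "\<dots> = (\<Sum>y\<in>?A. a y * gr_mult G b c (inv y \<otimes> x))"
      using A Z x b by (intro sum.cong refl arg_cong[where f = "(*) _"]
          gr_mult_eq_sum_translated[symmetric]) (auto simp: set_mult_def)
    also have "\<dots> = gr_mult G a (gr_mult G b c) x"
      using x by (simp add: gr_mult_def)
    finally show ?thesis .
  qed (simp add: gr_mult_outside_carrier)
qed

lemma gr_mult_inverse_unique:
  assumes "x \<in> group_ring G" "y \<in> group_ring G" "z \<in> group_ring G"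
    and "gr_mult G x y = gr_one G" "gr_mult G y z = (gr_one G :: 'a \<Rightarrow> 'k::semiring_1)"
  shows "x = z"
  by (metis assms gr_mult_assoc gr_mult_one_left gr_mult_one_right)

lemma gr_supp_gr_mult_monomial_right:
  assumes c: "c \<in> group_ring G" and h: "gr_supp d = {h}" "h \<in> carrier G"
  shows "gr_supp (gr_mult G c (d :: 'a \<Rightarrow> 'k::semiring_no_zero_divisors))
       = (\<lambda>y. y \<otimes> h) ` gr_supp c"
proof -
  have "gr_mult G c d x = c (x \<otimes> inv h) * d h" if x: "x \<in> carrier G" for x
  proof -
    have "c y * d (inv y \<otimes> x) = c y * (if y = x \<otimes> inv h then d h else 0)"
      if "y \<in> gr_supp c" for y
    proof -
      have "y \<in> carrier G" using group_ring_supp_in_carrier[OF c that] .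
      then have "inv y \<otimes> x = h \<longleftrightarrow> y = x \<otimes> inv h"
        using x h(2) by (metis inv_closed inv_solve_left' inv_solve_right m_closed)
      then show ?thesis using h(1) by (auto simp: gr_supp_def)
    qed
    then have "gr_mult G c d x = (\<Sum>y\<in>gr_supp c. c y * (if y = x \<otimes> inv h then d h else 0))"
      using x by (simp add: gr_mult_def cong: sum.cong)
    also have "\<dots> = c (x \<otimes> inv h) * d h"
      using group_ring_finite_supp[OF c]
      by (simp add: if_distrib[of "(*) _"] gr_supp_def cong: if_cong)
    finally show ?thesis .
  qed
  note prod = this
  have "d h \<noteq> 0" using h(1) by (auto simp: gr_supp_def)
  show ?thesis
  proof (intro equalityI subsetI)
    fix x assume x: "x \<in> gr_supp (gr_mult G c d)"
    then have "x \<in> carrier G"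
      using gr_mult_outside_carrier unfolding gr_supp_def by force
    with x prod have "x \<otimes> inv h \<in> gr_supp c" by (simp add: gr_supp_def)
    moreover have "x = x \<otimes> inv h \<otimes> h"
      using \<open>x \<in> carrier G\<close> h(2) by (simp add: m_assoc)
    ultimately show "x \<in> (\<lambda>y. y \<otimes> h) ` gr_supp c" by blast
  next
    fix x assume "x \<in> (\<lambda>y. y \<otimes> h) ` gr_supp c"
    then obtain y where y: "y \<in> gr_supp c" "x = y \<otimes> h" by blast
    have "y \<in> carrier G" using group_ring_supp_in_carrier[OF c y(1)] .
    with y h(2) prod[of x] \<open>d h \<noteq> 0\<close> show "x \<in> gr_supp (gr_mult G c d)"
      by (simp add: gr_supp_def m_assoc)
  qed
qed

lemma gr_supp_gr_mult_monomial_left: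
  assumes d: "d \<in> group_ring G" and g: "gr_supp c = {g}" "g \<in> carrier G"
  shows "gr_supp (gr_mult G (c :: 'a \<Rightarrow> 'k::semiring_no_zero_divisors) d)
       = (\<otimes>) g ` gr_supp d"
proof -
  have prod: "gr_mult G c d x = c g * d (inv g \<otimes> x)" if "x \<in> carrier G" for x
    using that g(1) by (simp add: gr_mult_def)
  have "c g \<noteq> 0" using g(1) by (auto simp: gr_supp_def)
  show ?thesis
  proof (intro equalityI subsetI)
    fix x assume x: "x \<in> gr_supp (gr_mult G c d)"
    then have "x \<in> carrier G"
      using gr_mult_outside_carrier unfolding gr_supp_def by force
    with x prod have "inv g \<otimes> x \<in> gr_supp d" by (simp add: gr_supp_def)
    moreover have "x = g \<otimes> (inv g \<otimes> x)"
      using \<open>x \<in> carrier G\<close> g(2) by (simp add: m_assoc[symmetric])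
    ultimately show "x \<in> (\<otimes>) g ` gr_supp d" by blast
  next
    fix x assume "x \<in> (\<otimes>) g ` gr_supp d"
    then obtain y where y: "y \<in> gr_supp d" "x = g \<otimes> y" by blast
    have "y \<in> carrier G" using group_ring_supp_in_carrier[OF d y(1)] .
    with y g(2) prod[of x] \<open>c g \<noteq> 0\<close> show "x \<in> gr_supp (gr_mult G c d)"
      by (simp add: gr_supp_def m_assoc[symmetric])
  qed
qed

lemma gr_supp_nonempty_of_inverse:
  assumes "gr_mult G c d = (gr_one G :: 'a \<Rightarrow> 'k::semiring_1)"
  shows "gr_supp c \<noteq> {}" "gr_supp d \<noteq> {}"
proof -
  have "(\<Sum>y\<in>gr_supp c. c y * d (inv y \<otimes> \<one>)) = 1"
    using fun_cong[OF assms, of \<one>] by (simp add: gr_mult_def gr_one_def)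
  then obtain y where "c y * d (inv y \<otimes> \<one>) \<noteq> 0"
    by (metis (no_types, lifting) sum.neutral zero_neq_one)
  then have "c y \<noteq> 0" "d (inv y \<otimes> \<one>) \<noteq> 0" by auto
  then show "gr_supp c \<noteq> {}" "gr_supp d \<noteq> {}"
    unfolding gr_supp_def by blast+
qed

lemma group_ring_supp_singleton:
  assumes "a \<in> group_ring G" "gr_supp a \<noteq> {}" "gr_rank a \<le> 1"
  obtains g where "gr_supp a = {g}" "g \<in> carrier G"
proof -
  have "card (gr_supp a) = 1"
    using assms group_ring_finite_supp[OF assms(1)] unfolding gr_rank_def
    by (simp add: le_Suc_eq)
  then obtain g where "gr_supp a = {g}" by (rule card_1_singletonE)
  with assms(1) group_ring_supp_subset show thesis by (intro that) auto
qed

lemma gr_rank_le_one_of_inverse: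
  fixes c d :: "'a \<Rightarrow> 'k::semiring_1_no_zero_divisors"
  assumes c: "c \<in> group_ring G" and d: "d \<in> group_ring G"
    and cd: "gr_mult G c d = gr_one G"
  shows "gr_rank d \<le> 1 \<Longrightarrow> gr_rank c \<le> 1" and "gr_rank c \<le> 1 \<Longrightarrow> gr_rank d \<le> 1"
proof -
  assume "gr_rank d \<le> 1"
  then obtain h where h: "gr_supp d = {h}" "h \<in> carrier G"
    using group_ring_supp_singleton[OF d gr_supp_nonempty_of_inverse(2)[OF cd]] by blast
  have "inj_on (\<lambda>y. y \<otimes> h) (gr_supp c)"
    using inj_on_subset[OF inj_on_multc[OF h(2)] group_ring_supp_subset[OF c]] .
  then have "gr_rank c = gr_rank (gr_mult G c d)"
    unfolding gr_rank_def gr_supp_gr_mult_monomial_right[OF c h] by (simp add: card_image)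
  then show "gr_rank c \<le> 1" by (simp add: cd gr_rank_gr_one)
next
  assume "gr_rank c \<le> 1"
  then obtain g where g: "gr_supp c = {g}" "g \<in> carrier G"
    using group_ring_supp_singleton[OF c gr_supp_nonempty_of_inverse(1)[OF cd]] by blast
  have "inj_on ((\<otimes>) g) (gr_supp d)"
    using inj_on_subset[OF inj_on_cmult[OF g(2)] group_ring_supp_subset[OF d]] .
  then have "gr_rank d = gr_rank (gr_mult G c d)"
    unfolding gr_rank_def gr_supp_gr_mult_monomial_left[OF d g] by (simp add: card_image)
  then show "gr_rank d \<le> 1" by (simp add: cd gr_rank_gr_one)
qed

end

definition admissible_subgroup ::
    "('g, 'b) monoid_scheme \<Rightarrow> ('g \<Rightarrow> 'k::semiring_1) \<Rightarrow> ('g \<Rightarrow> 'k) \<Rightarrow> 'g set \<Rightarrow> bool" where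
  "admissible_subgroup G a b H \<longleftrightarrow> subgroup H G \<and>
     gr_mult G (gr_proj H a) (gr_proj H b) = gr_one G \<and>
     2 \<le> gr_rank (gr_proj H a) \<and> 2 \<le> gr_rank (gr_proj H b) \<and>
     (gr_mult G (gr_proj H b) (gr_proj H a) = gr_one G \<longrightarrow> a = gr_proj H a \<and> b = gr_proj H b)"

context group
begin

lemma admissible_subgroup_shrink_left:
  fixes a b :: "'a \<Rightarrow> 'k::semiring_1_no_zero_divisors"
  assumes adm: "admissible_subgroup G a b H" and a: "a \<in> group_ring G" and b: "b \<in> group_ring G"
    and K: "subgroup K G" "K \<subseteq> H" "gr_supp (gr_proj H a) \<subseteq> K"
  shows "admissible_subgroup G a b K"
proof -
  define c d where "c = gr_proj H a" and "d = gr_proj H b"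
  have cd: "gr_mult G c d = gr_one G" and c2: "2 \<le> gr_rank c"
    and two_sided: "gr_mult G d c = gr_one G \<Longrightarrow> a = c \<and> b = d"
    using adm unfolding admissible_subgroup_def c_def d_def by auto
  have ring: "c \<in> group_ring G" "d \<in> group_ring G" "gr_proj K b \<in> group_ring G"
    using a b by (simp_all add: c_def d_def gr_proj_in_group_ring)
  have Ka: "gr_proj K a = c"
    using gr_proj_gr_proj[OF K(2), of a] gr_proj_id[OF K(3)] by (simp add: c_def)
  have Kb: "gr_proj K b = gr_proj K d"
    using gr_proj_gr_proj[OF K(2), of b] by (simp add: d_def)
  have cd': "gr_mult G c (gr_proj K b) = gr_one G"
    using K cd by (simp add: Kb c_def gr_proj_gr_mult_left[symmetric] gr_proj_gr_one
        subgroup.one_closed)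
  moreover have "2 \<le> gr_rank (gr_proj K b)"
    using gr_rank_le_one_of_inverse(1)[OF ring(1,3) cd'] c2 by linarith
  moreover have "a = c \<and> b = gr_proj K b" if "gr_mult G (gr_proj K b) c = gr_one G"
    using gr_mult_inverse_unique[OF ring(3,1,2) that cd] two_sided that by simp
  ultimately show ?thesis
    using K(1) c2 unfolding admissible_subgroup_def Ka by blast
qed

lemma admissible_subgroup_shrink_right:
  fixes a b :: "'a \<Rightarrow> 'k::semiring_1_no_zero_divisors"
  assumes adm: "admissible_subgroup G a b H" and a: "a \<in> group_ring G" and b: "b \<in> group_ring G"
    and K: "subgroup K G" "K \<subseteq> H" "gr_supp (gr_proj H b) \<subseteq> K"
  shows "admissible_subgroup G a b K"
proof -
  define c d where "c = gr_proj H a" and "d = gr_proj H b"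
  have cd: "gr_mult G c d = gr_one G" and d2: "2 \<le> gr_rank d"
    and two_sided: "gr_mult G d c = gr_one G \<Longrightarrow> a = c \<and> b = d"
    using adm unfolding admissible_subgroup_def c_def d_def by auto
  have ring: "c \<in> group_ring G" "d \<in> group_ring G" "gr_proj K a \<in> group_ring G"
    using a b by (simp_all add: c_def d_def gr_proj_in_group_ring)
  have Kb: "gr_proj K b = d"
    using gr_proj_gr_proj[OF K(2), of b] gr_proj_id[OF K(3)] by (simp add: d_def)
  have Ka: "gr_proj K a = gr_proj K c"
    using gr_proj_gr_proj[OF K(2), of a] by (simp add: c_def)
  have c'd: "gr_mult G (gr_proj K a) d = gr_one G"
    using K cd ring(1) by (simp add: Ka d_def gr_proj_gr_mult_right[symmetric] gr_proj_gr_one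
        subgroup.one_closed)
  moreover have "2 \<le> gr_rank (gr_proj K a)"
    using gr_rank_le_one_of_inverse(2)[OF ring(3,2) c'd] d2 by linarith
  moreover have "a = gr_proj K a \<and> b = d" if "gr_mult G d (gr_proj K a) = gr_one G"
    using gr_mult_inverse_unique[OF ring(1,2,3) cd that] two_sided that by simp
  ultimately show ?thesis
    using K(1) d2 unfolding admissible_subgroup_def Kb by blast
qed

lemma minimal_admissible_subgroup_supp_generate:
  fixes a b :: "'a \<Rightarrow> 'k::semiring_1_no_zero_divisors"
  assumes adm: "admissible_subgroup G a b H" and a: "a \<in> group_ring G" and b: "b \<in> group_ring G"
    and min: "\<And>K. admissible_subgroup G a b K \<Longrightarrow>
      gr_rank (gr_proj H a) + gr_rank (gr_proj H b) \<le> gr_rank (gr_proj K a) + gr_rank (gr_proj K b)"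
  shows "gr_supp (gr_proj H b) \<subseteq> generate G (gr_supp (gr_proj H a))"
    and "gr_supp (gr_proj H a) \<subseteq> generate G (gr_supp (gr_proj H b))"
proof -
  have H: "subgroup H G" using adm unfolding admissible_subgroup_def by blast
  have supp_H: "gr_supp (gr_proj H e) \<subseteq> H" for e :: "'a \<Rightarrow> 'k"
    by (simp add: gr_supp_gr_proj)
  have generate: "subgroup (generate G (gr_supp (gr_proj H e))) G"
      "generate G (gr_supp (gr_proj H e)) \<subseteq> H"
      "gr_supp (gr_proj H e) \<subseteq> generate G (gr_supp (gr_proj H e))" for e :: "'a \<Rightarrow> 'k"
  proof -
    have "gr_supp (gr_proj H e) \<subseteq> carrier G" using supp_H subgroup.subset[OF H] by blast
    then show "subgroup (generate G (gr_supp (gr_proj H e))) G" by (rule generate_is_subgroup)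
  qed (use generate_subgroup_incl[OF supp_H H] in \<open>auto intro: generate.incl\<close>)
  have proj: "gr_proj K (gr_proj H e) = gr_proj K e" if "K \<subseteq> H" for K and e :: "'a \<Rightarrow> 'k"
    using gr_proj_gr_proj[OF that] .
  show "gr_supp (gr_proj H b) \<subseteq> generate G (gr_supp (gr_proj H a))"
  proof (rule supp_subset_of_gr_rank_le_gr_proj)
    let ?K = "generate G (gr_supp (gr_proj H a))"
    have "admissible_subgroup G a b ?K"
      using admissible_subgroup_shrink_left[OF adm a b generate] .
    moreover have "gr_proj ?K a = gr_proj H a"
      using proj[OF generate(2)] gr_proj_id[OF generate(3)] by metis
    ultimately show "gr_rank (gr_proj H b) \<le> gr_rank (gr_proj ?K (gr_proj H b))"
      using min proj[OF generate(2)] by fastforce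
  qed (use b gr_proj_in_group_ring in blast)
  show "gr_supp (gr_proj H a) \<subseteq> generate G (gr_supp (gr_proj H b))"
  proof (rule supp_subset_of_gr_rank_le_gr_proj)
    let ?K = "generate G (gr_supp (gr_proj H b))"
    have "admissible_subgroup G a b ?K"
      using admissible_subgroup_shrink_right[OF adm a b generate] .
    moreover have "gr_proj ?K b = gr_proj H b"
      using proj[OF generate(2)] gr_proj_id[OF generate(3)] by metis
    ultimately show "gr_rank (gr_proj H a) \<le> gr_rank (gr_proj ?K (gr_proj H a))"
      using min proj[OF generate(2)] by fastforce
  qed (use a gr_proj_in_group_ring in blast)
qed

end

theorem proposition2p3:
  fixes G :: "('g, 'b) monoid_scheme" and a b :: "'g \<Rightarrow> 'k::division_ring"
  assumes "group G"
    and "a \<in> group_ring G" and "b \<in> group_ring G"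
    and "gr_rank a \<ge> 2" and "gr_rank b \<ge> 2"
    and "gr_mult G a b = gr_one G"
  shows "\<exists>H. subgroup H G \<and>
    (let c = gr_proj H a; d = gr_proj H b in
       gr_mult G c d = gr_one G \<and>
       gr_rank c \<ge> 2 \<and> gr_rank d \<ge> 2 \<and>
       generate G (gr_supp c) = H \<and>
       generate G (gr_supp d) = H \<and>
       (gr_mult G d c = gr_one G \<longrightarrow> a = c \<and> b = d))"
proof -
  interpret group G by fact
  have "admissible_subgroup G a b (carrier G)"
    using assms gr_proj_id[OF group_ring_supp_subset[OF assms(2)]]
      gr_proj_id[OF group_ring_supp_subset[OF assms(3)]]
    by (simp add: admissible_subgroup_def subgroup_self)
  then obtain H where adm: "admissible_subgroup G a b H"
    and min: "\<And>K. admissible_subgroup G a b K \<Longrightarrow>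
      gr_rank (gr_proj H a) + gr_rank (gr_proj H b) \<le> gr_rank (gr_proj K a) + gr_rank (gr_proj K b)"
    using ex_has_least_nat[of "admissible_subgroup G a b" _
        "\<lambda>K. gr_rank (gr_proj K a) + gr_rank (gr_proj K b)"] by metis
  define c d where "c = gr_proj H a" and "d = gr_proj H b"
  define K where "K = generate G (gr_supp c)"
  note supp_generate = minimal_admissible_subgroup_supp_generate[OF adm assms(2,3) min,
      folded c_def d_def, folded K_def]
  have H: "subgroup H G" using adm unfolding admissible_subgroup_def by blast
  have supp_H: "gr_supp c \<subseteq> H" "gr_supp d \<subseteq> H"
    by (simp_all add: c_def d_def gr_supp_gr_proj)
  have K: "subgroup K G" "K \<subseteq> H"
    using generate_is_subgroup[of "gr_supp c"] supp_H(1) subgroup.subset[OF H]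
      generate_subgroup_incl[OF supp_H(1) H] unfolding K_def by auto
  have K_eq: "generate G (gr_supp d) = K"
    using generate_subgroup_incl[OF supp_generate(1) K(1)]
      generate_subgroup_incl[OF supp_generate(2) generate_is_subgroup]
      supp_H(2) subgroup.subset[OF H] unfolding K_def by blast
  have "gr_supp c \<subseteq> K"
    unfolding K_def by (auto intro: generate.incl)
  then have "gr_proj K a = c" "gr_proj K b = d"
    using gr_proj_gr_proj[OF K(2)] gr_proj_id supp_generate(1) unfolding c_def d_def by metis+
  then show ?thesis
    using adm K(1) K_eq unfolding admissible_subgroup_def
    by (intro exI[of _ K]) (simp add: Let_def K_def c_def d_def)
qed

end
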